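(* If $\mathbf{H}=(H,\le,\wedge,\vee,0,1,\to)$ is a Heyting algebra, then its canonical frame $(X,\perp,Y,T)$ is a Heyting frame.
   Context: The canonical frame of $\mathbf H$: $X$ is the set of filters of $\mathbf H$, $Y$ the set of ideals, $x\perp y$ iff $x\cap y\neq\emptyset$; for $x\in X,v\in Y$, $x\leadsto v$ is the ideal generated by $\{a\to b:a\in x,b\in v\}$, and $yTxv$ iff $x\leadsto v\subseteq y$. General notions: $U'=\{y:\forall x\in U\ x\perp y\}$ for $U\subseteq X$, ${}'V=\{x:\forall y\in V\ x\perp y\}$ for $V\subseteq Y$; $A\subseteq X$ is stable if $A={}'(A')$, $B\subseteq Y$ co-stable if $B=({}'B)'$. Preorders: $x\le z$ iff $\{x\}'\subseteq\{z\}'$; $y\le v$ iff ${}'\{y\}\subseteq{}'\{v\}$; separated means both are partial orders; $\Gamma u$ is the set of elements above $u$. $T'\subseteq X\times X\times Y$: $uT'xv$ iff $\forall y(yTxv\Rightarrow u\perp y)$. An implicative frame is $(X,\perp,Y,T)$ with: (F0) $x\perp y$ iff $uT'xy$ for all $u\in X$; (F1) separated; (F2) each $\{y:yTxv\}$ equals $\Gamma w$ for some $w\in Y$; (F3) if $yTxv$, $x_1\le x$, $v_1\le v$ then $yTx_1v_1$; (F4) for all $u,x\in X,v\in Y$, $\{x_1:uT'x_1v\}$ is stable and $\{v_1:uT'xv_1\}$ is co-stable. Derived relations: $vR^{\partial11}zx$ iff $xT'zv$; $uR^{111}zx$ iff $\forall v\in Y(vR^{\partial11}zx\Rightarrow u\perp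 v)$. Upper bound relation: $uR_\le xz$ iff $x\le u$ and $z\le u$. A Heyting frame is an implicative frame with $\{u:uR^{111}xz\}=\{u:uR_\le xz\}$ for all $x,z\in X$. *)

theory Defs
  imports Main
begin

text \<open>The carrier H is the whole type.\<close>

definition heyting_imp :: "('a::bounded_lattice \<Rightarrow> 'a \<Rightarrow> 'a) \<Rightarrow> bool" where
  "heyting_imp imp \<longleftrightarrow> (\<forall>a b c. c \<le> imp a b \<longleftrightarrow> inf c a \<le> b)"

definition lat_filter :: "'a::lattice set \<Rightarrow> bool" where
  "lat_filter F \<longleftrightarrow> F \<noteq> {} \<and> (\<forall>a\<in>F. \<forall>b. a \<le> b \<longrightarrow> b \<in> F) \<and> (\<forall>a\<in>F. \<forall>b\<in>F. inf a b \<in> F)"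

definition lat_ideal :: "'a::lattice set \<Rightarrow> bool" where
  "lat_ideal I \<longleftrightarrow> I \<noteq> {} \<and> (\<forall>a\<in>I. \<forall>b. b \<le> a \<longrightarrow> b \<in> I) \<and> (\<forall>a\<in>I. \<forall>b\<in>I. sup a b \<in> I)"

definition ideal_gen :: "'a::lattice set \<Rightarrow> 'a set" where
  "ideal_gen S = \<Inter>{I. lat_ideal I \<and> S \<subseteq> I}"

definition canX :: "'a::lattice set set" where
  "canX = {x. lat_filter x}"

definition canY :: "'a::lattice set set" where
  "canY = {y. lat_ideal y}"

definition can_perp :: "'a set \<Rightarrow> 'a set \<Rightarrow> bool" where
  "can_perp x y \<longleftrightarrow> x \<inter> y \<noteq> {}"

definition can_arrow :: "('a::lattice \<Rightarrow> 'a \<Rightarrow> 'a) \<Rightarrow> 'a set \<Rightarrow> 'a set \<Rightarrow> 'a set" where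
  "can_arrow imp x v = ideal_gen {imp a b | a b. a \<in> x \<and> b \<in> v}"

definition can_T :: "('a::lattice \<Rightarrow> 'a \<Rightarrow> 'a) \<Rightarrow> 'a set \<Rightarrow> 'a set \<Rightarrow> 'a set \<Rightarrow> bool" where
  "can_T imp y x v \<longleftrightarrow> can_arrow imp x v \<subseteq> y"

definition perpR :: "'y set \<Rightarrow> ('x \<Rightarrow> 'y \<Rightarrow> bool) \<Rightarrow> 'x set \<Rightarrow> 'y set" where
  "perpR Y perp U = {y\<in>Y. \<forall>x\<in>U. perp x y}"

definition perpL :: "'x set \<Rightarrow> ('x \<Rightarrow> 'y \<Rightarrow> bool) \<Rightarrow> 'y set \<Rightarrow> 'x set" where
  "perpL X perp V = {x\<in>X. \<forall>y\<in>V. perp x y}"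

definition stable :: "'x set \<Rightarrow> ('x \<Rightarrow> 'y \<Rightarrow> bool) \<Rightarrow> 'y set \<Rightarrow> 'x set \<Rightarrow> bool" where
  "stable X perp Y A \<longleftrightarrow> A \<subseteq> X \<and> A = perpL X perp (perpR Y perp A)"

definition costable :: "'x set \<Rightarrow> ('x \<Rightarrow> 'y \<Rightarrow> bool) \<Rightarrow> 'y set \<Rightarrow> 'y set \<Rightarrow> bool" where
  "costable X perp Y B \<longleftrightarrow> B \<subseteq> Y \<and> B = perpR Y perp (perpL X perp B)"

definition leX :: "('x \<Rightarrow> 'y \<Rightarrow> bool) \<Rightarrow> 'y set \<Rightarrow> 'x \<Rightarrow> 'x \<Rightarrow> bool" where
  "leX perp Y x z \<longleftrightarrow> perpR Y perp {x} \<subseteq> perpR Y perp {z}"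

definition leY :: "'x set \<Rightarrow> ('x \<Rightarrow> 'y \<Rightarrow> bool) \<Rightarrow> 'y \<Rightarrow> 'y \<Rightarrow> bool" where
  "leY X perp y v \<longleftrightarrow> perpL X perp {y} \<subseteq> perpL X perp {v}"

definition separated :: "'x set \<Rightarrow> ('x \<Rightarrow> 'y \<Rightarrow> bool) \<Rightarrow> 'y set \<Rightarrow> bool" where
  "separated X perp Y \<longleftrightarrow>
     (\<forall>x\<in>X. \<forall>z\<in>X. leX perp Y x z \<and> leX perp Y z x \<longrightarrow> x = z) \<and>
     (\<forall>y\<in>Y. \<forall>v\<in>Y. leY X perp y v \<and> leY X perp v y \<longrightarrow> y = v)"

definition GammaY :: "'x set \<Rightarrow> ('x \<Rightarrow> 'y \<Rightarrow> bool) \<Rightarrow> 'y set \<Rightarrow> 'y \<Rightarrow> 'y set" where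
  "GammaY X perp Y w = {y\<in>Y. leY X perp w y}"

definition Tprime :: "('x \<Rightarrow> 'y \<Rightarrow> bool) \<Rightarrow> 'y set \<Rightarrow> ('y \<Rightarrow> 'x \<Rightarrow> 'y \<Rightarrow> bool) \<Rightarrow> 'x \<Rightarrow> 'x \<Rightarrow> 'y \<Rightarrow> bool" where
  "Tprime perp Y T u x v \<longleftrightarrow> (\<forall>y\<in>Y. T y x v \<longrightarrow> perp u y)"

definition implicative_frame ::
  "'x set \<Rightarrow> ('x \<Rightarrow> 'y \<Rightarrow> bool) \<Rightarrow> 'y set \<Rightarrow> ('y \<Rightarrow> 'x \<Rightarrow> 'y \<Rightarrow> bool) \<Rightarrow> bool" where
  "implicative_frame X perp Y T \<longleftrightarrow>
     \<comment> \<open>(F0)\<close>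
     (\<forall>x\<in>X. \<forall>y\<in>Y. perp x y \<longleftrightarrow> (\<forall>u\<in>X. Tprime perp Y T u x y)) \<and>
     \<comment> \<open>(F1)\<close>
     separated X perp Y \<and>
     \<comment> \<open>(F2)\<close>
     (\<forall>x\<in>X. \<forall>v\<in>Y. \<exists>w\<in>Y. {y\<in>Y. T y x v} = GammaY X perp Y w) \<and>
     \<comment> \<open>(F3)\<close>
     (\<forall>y\<in>Y. \<forall>x\<in>X. \<forall>v\<in>Y. \<forall>x1\<in>X. \<forall>v1\<in>Y.
        T y x v \<and> leX perp Y x1 x \<and> leY X perp v1 v \<longrightarrow> T y x1 v1) \<and>
     \<comment> \<open>(F4)\<close>
     (\<forall>u\<in>X. \<forall>x\<in>X. \<forall>v\<in>Y.
        stable X perp Y {x1\<in>X. Tprime perp Y T u x1 v} \<and>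
        costable X perp Y {v1\<in>Y. Tprime perp Y T u x v1})"

definition Rd11 :: "('x \<Rightarrow> 'y \<Rightarrow> bool) \<Rightarrow> 'y set \<Rightarrow> ('y \<Rightarrow> 'x \<Rightarrow> 'y \<Rightarrow> bool) \<Rightarrow> 'y \<Rightarrow> 'x \<Rightarrow> 'x \<Rightarrow> bool" where
  "Rd11 perp Y T v z x \<longleftrightarrow> Tprime perp Y T x z v"

definition R111 :: "('x \<Rightarrow> 'y \<Rightarrow> bool) \<Rightarrow> 'y set \<Rightarrow> ('y \<Rightarrow> 'x \<Rightarrow> 'y \<Rightarrow> bool) \<Rightarrow> 'x \<Rightarrow> 'x \<Rightarrow> 'x \<Rightarrow> bool" where
  "R111 perp Y T u z x \<longleftrightarrow> (\<forall>v\<in>Y. Rd11 perp Y T v z x \<longrightarrow> perp u v)"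

definition Rle :: "('x \<Rightarrow> 'y \<Rightarrow> bool) \<Rightarrow> 'y set \<Rightarrow> 'x \<Rightarrow> 'x \<Rightarrow> 'x \<Rightarrow> bool" where
  "Rle perp Y u x z \<longleftrightarrow> leX perp Y x u \<and> leX perp Y z u"

definition heyting_frame ::
  "'x set \<Rightarrow> ('x \<Rightarrow> 'y \<Rightarrow> bool) \<Rightarrow> 'y set \<Rightarrow> ('y \<Rightarrow> 'x \<Rightarrow> 'y \<Rightarrow> bool) \<Rightarrow> bool" where
  "heyting_frame X perp Y T \<longleftrightarrow>
     implicative_frame X perp Y T \<and>
     (\<forall>x\<in>X. \<forall>z\<in>X. {u\<in>X. R111 perp Y T u x z} = {u\<in>X. Rle perp Y u x z})"

end

theory Submission
  imports Defs
begin

text \<open>In the canonical frame both preorders are inclusion. By residuation, u T' x v holds iff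
  inf c a \<le> b for some c \<in> u, a \<in> x, b \<in> v; so it says that the filter x meets the ideal
  u \<leadsto> v, and equally that the ideal v meets the join of the filters u and x. Hence the sets in
  (F4) are polars of a single ideal resp. filter, and u R111 x z says that the join of x and z
  lies below u, which is u R_le x z.\<close>

lemma lat_filter_up: "lat_filter F \<Longrightarrow> a \<in> F \<Longrightarrow> a \<le> b \<Longrightarrow> b \<in> F"
  unfolding lat_filter_def by blast

lemma lat_filter_inf: "lat_filter F \<Longrightarrow> a \<in> F \<Longrightarrow> b \<in> F \<Longrightarrow> inf a b \<in> F"
  unfolding lat_filter_def by blast

lemma lat_filter_top: "lat_filter (F :: 'a::bounded_lattice set) \<Longrightarrow> top \<in> F"
  unfolding lat_filter_def by (metis all_not_in_conv top_greatest)

lemma lat_ideal_down: "lat_ideal I \<Longrightarrow> a \<in> I \<Longrightarrow> b \<le> a \<Longrightarrow> b \<in> I"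
  unfolding lat_ideal_def by blast

lemma lat_ideal_sup: "lat_ideal I \<Longrightarrow> a \<in> I \<Longrightarrow> b \<in> I \<Longrightarrow> sup a b \<in> I"
  unfolding lat_ideal_def by blast

lemma lat_filter_atLeast: "lat_filter {a..}"
  unfolding lat_filter_def by auto

lemma lat_ideal_atMost: "lat_ideal {..a}"
  unfolding lat_ideal_def by auto

lemma perpL_perpR_perpL:
  assumes "V \<subseteq> Y"
  shows "perpL X perp (perpR Y perp (perpL X perp V)) = perpL X perp V"
  using assms unfolding perpL_def perpR_def by blast

lemma perpR_perpL_perpR:
  assumes "U \<subseteq> X"
  shows "perpR Y perp (perpL X perp (perpR Y perp U)) = perpR Y perp U"
  using assms unfolding perpL_def perpR_def by blast

lemma stable_perpL: "V \<subseteq> Y \<Longrightarrow> stable X perp Y (perpL X perp V)"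
  unfolding stable_def by (simp add: perpL_perpR_perpL) (auto simp: perpL_def)

lemma costable_perpR: "U \<subseteq> X \<Longrightarrow> costable X perp Y (perpR Y perp U)"
  unfolding costable_def by (simp add: perpR_perpL_perpR) (auto simp: perpR_def)

lemma mem_canX_iff: "x \<in> canX \<longleftrightarrow> lat_filter x"
  by (simp add: canX_def)

lemma mem_canY_iff: "y \<in> canY \<longleftrightarrow> lat_ideal y"
  by (simp add: canY_def)

lemma perpR_can_singleton: "perpR canY can_perp {x} = {y \<in> canY. x \<inter> y \<noteq> {}}"
  unfolding perpR_def can_perp_def by auto

lemma perpL_can_singleton: "perpL canX can_perp {y} = {x \<in> canX. x \<inter> y \<noteq> {}}"
  unfolding perpL_def can_perp_def by auto

lemma leX_can_iff:
  assumes "lat_filter z"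
  shows "leX can_perp canY x z \<longleftrightarrow> x \<subseteq> z"
proof
  assume le: "leX can_perp canY x z"
  show "x \<subseteq> z"
  proof
    fix a assume "a \<in> x"
    then have "{..a} \<in> perpR canY can_perp {x}"
      using lat_ideal_atMost unfolding perpR_can_singleton mem_canY_iff by auto
    with le obtain b where "b \<in> z" "b \<le> a"
      unfolding leX_def perpR_can_singleton by auto
    with assms show "a \<in> z" using lat_filter_up by blast
  qed
qed (auto simp: leX_def perpR_can_singleton)

lemma leY_can_iff:
  assumes "lat_ideal v"
  shows "leY canX can_perp y v \<longleftrightarrow> y \<subseteq> v"
proof
  assume le: "leY canX can_perp y v"
  show "y \<subseteq> v"
  proof
    fix a assume "a \<in> y"
    then have "{a..} \<in> perpL canX can_perp {y}"
      using lat_filter_atLeast unfolding perpL_can_singleton mem_canX_iff by auto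
    with le obtain b where "b \<in> v" "a \<le> b"
      unfolding leY_def perpL_can_singleton by auto
    with assms show "a \<in> v" using lat_ideal_down by blast
  qed
qed (auto simp: leY_def perpL_can_singleton)

lemma separated_can: "separated canX can_perp canY"
  by (auto simp: separated_def mem_canX_iff mem_canY_iff leX_can_iff leY_can_iff)

definition filter_join :: "'a::lattice set \<Rightarrow> 'a set \<Rightarrow> 'a set" where
  "filter_join u x = {b. \<exists>c\<in>u. \<exists>a\<in>x. inf c a \<le> b}"

lemma lat_filter_filter_join:
  assumes u: "lat_filter u" and x: "lat_filter x"
  shows "lat_filter (filter_join u x)"
  unfolding lat_filter_def
proof (intro conjI ballI allI impI)
  from u x obtain c a where "c \<in> u" "a \<in> x" unfolding lat_filter_def by (meson ex_in_conv)
  then show "filter_join u x \<noteq> {}" unfolding filter_join_def by blast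
next
  fix b b' assume "b \<in> filter_join u x" "b \<le> b'"
  then show "b' \<in> filter_join u x" unfolding filter_join_def using order_trans by blast
next
  fix b1 b2 assume "b1 \<in> filter_join u x" "b2 \<in> filter_join u x"
  then obtain c1 a1 c2 a2 where "c1 \<in> u" "a1 \<in> x" "inf c1 a1 \<le> b1"
      and "c2 \<in> u" "a2 \<in> x" "inf c2 a2 \<le> b2"
    unfolding filter_join_def by blast
  moreover have "inf (inf c1 c2) (inf a1 a2) \<le> inf (inf c1 a1) (inf c2 a2)"
    by (simp add: inf.coboundedI1 inf.coboundedI2 le_infI)
  ultimately have "inf (inf c1 c2) (inf a1 a2) \<le> inf b1 b2"
    using inf_mono order_trans by blast
  moreover have "inf c1 c2 \<in> u" "inf a1 a2 \<in> x"
    using \<open>c1 \<in> u\<close> \<open>c2 \<in> u\<close> \<open>a1 \<in> x\<close> \<open>a2 \<in> x\<close> u x lat_filter_inf by blast+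
  ultimately show "inf b1 b2 \<in> filter_join u x" unfolding filter_join_def by blast
qed

lemma filter_join_subset_iff:
  fixes u x w :: "'a::bounded_lattice set"
  assumes "lat_filter u" "lat_filter x" "lat_filter w"
  shows "filter_join u x \<subseteq> w \<longleftrightarrow> u \<subseteq> w \<and> x \<subseteq> w"
proof
  have "inf c top \<le> c" "inf top a \<le> a" for c a :: 'a by simp_all
  then have "u \<subseteq> filter_join u x" "x \<subseteq> filter_join u x"
    using assms(1,2) lat_filter_top unfolding filter_join_def by blast+
  then show "filter_join u x \<subseteq> w \<Longrightarrow> u \<subseteq> w \<and> x \<subseteq> w" by blast
next
  assume "u \<subseteq> w \<and> x \<subseteq> w"
  then show "filter_join u x \<subseteq> w"
    using assms(3) lat_filter_inf lat_filter_up unfolding filter_join_def by blast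
qed

definition imp_downset :: "('a::lattice \<Rightarrow> 'a \<Rightarrow> 'a) \<Rightarrow> 'a set \<Rightarrow> 'a set \<Rightarrow> 'a set" where
  "imp_downset imp x v = {d. \<exists>a\<in>x. \<exists>b\<in>v. d \<le> imp a b}"

context
  fixes imp :: "'a::bounded_lattice \<Rightarrow> 'a \<Rightarrow> 'a"
  assumes heyting: "heyting_imp imp"
begin

lemma residuation: "c \<le> imp a b \<longleftrightarrow> inf c a \<le> b"
  using heyting unfolding heyting_imp_def by blast

lemma imp_anti_mono:
  assumes "a \<le> a'" "b' \<le> b"
  shows "imp a' b' \<le> imp a b"
proof -
  have "inf (imp a' b') a \<le> inf (imp a' b') a'"
    using assms(1) by (simp add: le_infI2)
  also have "\<dots> \<le> b'"
    using residuation by blast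
  also have "\<dots> \<le> b" by (fact assms(2))
  finally show ?thesis by (simp add: residuation)
qed

lemma lat_ideal_imp_downset:
  assumes x: "lat_filter x" and v: "lat_ideal v"
  shows "lat_ideal (imp_downset imp x v)"
  unfolding lat_ideal_def
proof (intro conjI ballI allI impI)
  from x v obtain a b where "a \<in> x" "b \<in> v"
    unfolding lat_filter_def lat_ideal_def by (meson ex_in_conv)
  then show "imp_downset imp x v \<noteq> {}" unfolding imp_downset_def by blast
next
  fix d d' assume "d \<in> imp_downset imp x v" "d' \<le> d"
  then show "d' \<in> imp_downset imp x v" unfolding imp_downset_def using order_trans by blast
next
  fix d1 d2 assume "d1 \<in> imp_downset imp x v" "d2 \<in> imp_downset imp x v"
  then obtain a1 b1 a2 b2 where "a1 \<in> x" "b1 \<in> v" "d1 \<le> imp a1 b1"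
      and "a2 \<in> x" "b2 \<in> v" "d2 \<le> imp a2 b2"
    unfolding imp_downset_def by blast
  moreover have "imp a1 b1 \<le> imp (inf a1 a2) (sup b1 b2)" "imp a2 b2 \<le> imp (inf a1 a2) (sup b1 b2)"
    by (simp_all add: imp_anti_mono)
  ultimately have "sup d1 d2 \<le> imp (inf a1 a2) (sup b1 b2)"
    by (meson order_trans sup_least)
  moreover have "inf a1 a2 \<in> x" "sup b1 b2 \<in> v"
    using \<open>a1 \<in> x\<close> \<open>a2 \<in> x\<close> \<open>b1 \<in> v\<close> \<open>b2 \<in> v\<close> x v lat_filter_inf lat_ideal_sup by blast+
  ultimately show "sup d1 d2 \<in> imp_downset imp x v" unfolding imp_downset_def by blast
qed

lemma can_arrow_eq_imp_downset:
  assumes "lat_filter x" "lat_ideal v"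
  shows "can_arrow imp x v = imp_downset imp x v"
proof -
  have "imp_downset imp x v \<subseteq> I" if "lat_ideal I" "{imp a b | a b. a \<in> x \<and> b \<in> v} \<subseteq> I" for I
    using that lat_ideal_down unfolding imp_downset_def by blast
  moreover have "{imp a b | a b. a \<in> x \<and> b \<in> v} \<subseteq> imp_downset imp x v"
    unfolding imp_downset_def by auto
  ultimately show ?thesis
    unfolding can_arrow_def ideal_gen_def using lat_ideal_imp_downset[OF assms] by blast
qed

lemma can_T_iff:
  assumes "lat_filter x" "lat_ideal v"
  shows "can_T imp y x v \<longleftrightarrow> imp_downset imp x v \<subseteq> y"
  unfolding can_T_def can_arrow_eq_imp_downset[OF assms] ..

lemma Tprime_can_iff:
  assumes x: "lat_filter x" and v: "lat_ideal v"
  shows "Tprime can_perp canY (can_T imp) u x v \<longleftrightarrow> (\<exists>c\<in>u. \<exists>a\<in>x. \<exists>b\<in>v. inf c a \<le> b)"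
proof -
  have "imp_downset imp x v \<in> canY"
    using lat_ideal_imp_downset[OF x v] unfolding mem_canY_iff by blast
  then have "Tprime can_perp canY (can_T imp) u x v \<longleftrightarrow> u \<inter> imp_downset imp x v \<noteq> {}"
    unfolding Tprime_def can_perp_def can_T_iff[OF x v] by blast
  also have "\<dots> \<longleftrightarrow> (\<exists>c\<in>u. \<exists>a\<in>x. \<exists>b\<in>v. inf c a \<le> b)"
    unfolding imp_downset_def residuation by blast
  finally show ?thesis .
qed

lemma Tprime_can_iff_meets_imp_downset:
  assumes "lat_filter x" "lat_ideal v"
  shows "Tprime can_perp canY (can_T imp) u x v \<longleftrightarrow> x \<inter> imp_downset imp u v \<noteq> {}"
proof -
  have "(\<exists>c\<in>u. \<exists>a\<in>x. \<exists>b\<in>v. inf c a \<le> b) \<longleftrightarrow> (\<exists>a\<in>x. \<exists>c\<in>u. \<exists>b\<in>v. inf a c \<le> b)"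
    by (metis inf_commute)
  then show ?thesis
    unfolding Tprime_can_iff[OF assms] imp_downset_def residuation by blast
qed

lemma Tprime_can_iff_meets_filter_join:
  assumes "lat_filter x" "lat_ideal v"
  shows "Tprime can_perp canY (can_T imp) u x v \<longleftrightarrow> v \<inter> filter_join u x \<noteq> {}"
  unfolding Tprime_can_iff[OF assms] filter_join_def by blast

lemma can_perp_iff_Tprime:
  assumes x: "lat_filter x" and y: "lat_ideal y"
  shows "can_perp x y \<longleftrightarrow> (\<forall>u\<in>canX. Tprime can_perp canY (can_T imp) u x y)"
proof
  assume "can_perp x y"
  then obtain c where c: "c \<in> x" "c \<in> y" unfolding can_perp_def by blast
  show "\<forall>u\<in>canX. Tprime can_perp canY (can_T imp) u x y"
  proof
    fix u :: "'a set" assume "u \<in> canX"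
    then have "top \<in> u" using lat_filter_top by (simp add: mem_canX_iff)
    moreover have "inf top c \<le> c" by simp
    ultimately show "Tprime can_perp canY (can_T imp) u x y"
      unfolding Tprime_can_iff[OF x y] using c by blast
  qed
next
  assume "\<forall>u\<in>canX. Tprime can_perp canY (can_T imp) u x y"
  then have "Tprime can_perp canY (can_T imp) {top..} x y"
    using lat_filter_atLeast mem_canX_iff by blast
  then obtain c a b where "top \<le> c" "a \<in> x" "b \<in> y" "inf c a \<le> b"
    unfolding Tprime_can_iff[OF x y] by auto
  then have "b \<in> x \<inter> y" using lat_filter_up[OF x] by (simp add: top_unique)
  then show "can_perp x y" unfolding can_perp_def by blast
qed

lemma can_T_eq_GammaY:
  assumes "lat_filter x" "lat_ideal v"
  shows "{y \<in> canY. can_T imp y x v} = GammaY canX can_perp canY (imp_downset imp x v)"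
  unfolding GammaY_def mem_canY_iff
  by (simp add: can_T_iff[OF assms] leY_can_iff cong: conj_cong)

lemma can_T_anti_mono:
  assumes "lat_filter x" "lat_ideal v" "lat_filter x1" "lat_ideal v1"
    and "can_T imp y x v" "x1 \<subseteq> x" "v1 \<subseteq> v"
  shows "can_T imp y x1 v1"
  using assms unfolding can_T_iff[OF assms(1,2)] can_T_iff[OF assms(3,4)] imp_downset_def
  by blast

lemma Tprime_can_middle_eq_perpL:
  assumes "lat_ideal v"
  shows "{x \<in> canX. Tprime can_perp canY (can_T imp) u x v}
    = perpL canX can_perp {imp_downset imp u v}"
  unfolding perpL_can_singleton mem_canX_iff
  by (simp add: Tprime_can_iff_meets_imp_downset assms cong: conj_cong)

lemma Tprime_can_last_eq_perpR:
  assumes "lat_filter x"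
  shows "{v \<in> canY. Tprime can_perp canY (can_T imp) u x v}
    = perpR canY can_perp {filter_join u x}"
  unfolding perpR_can_singleton mem_canY_iff
  by (simp add: Tprime_can_iff_meets_filter_join assms Int_commute cong: conj_cong)

lemma R111_can_iff_Rle:
  assumes x: "lat_filter x" and z: "lat_filter z" and u: "lat_filter u"
  shows "R111 can_perp canY (can_T imp) u x z \<longleftrightarrow> Rle can_perp canY u x z"
proof -
  have "R111 can_perp canY (can_T imp) u x z
      \<longleftrightarrow> (\<forall>v\<in>canY. v \<inter> filter_join z x \<noteq> {} \<longrightarrow> u \<inter> v \<noteq> {})"
    by (auto simp: R111_def Rd11_def can_perp_def mem_canY_iff Tprime_can_iff_meets_filter_join[OF x])
  also have "\<dots> \<longleftrightarrow> leX can_perp canY (filter_join z x) u"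
    unfolding leX_def perpR_can_singleton by blast
  also have "\<dots> \<longleftrightarrow> x \<subseteq> u \<and> z \<subseteq> u"
    using leX_can_iff[OF u] filter_join_subset_iff[OF z x u] by blast
  also have "\<dots> \<longleftrightarrow> Rle can_perp canY u x z"
    unfolding Rle_def leX_can_iff[OF u] ..
  finally show ?thesis .
qed

lemma implicative_frame_can: "implicative_frame canX can_perp canY (can_T imp)"
  unfolding implicative_frame_def
proof (intro conjI ballI impI)
  show "separated canX can_perp canY" by (fact separated_can)
next
  fix x v :: "'a set" assume "x \<in> canX" "v \<in> canY"
  then have x: "lat_filter x" and v: "lat_ideal v" by (simp_all add: mem_canX_iff mem_canY_iff)
  show "can_perp x v \<longleftrightarrow> (\<forall>u\<in>canX. Tprime can_perp canY (can_T imp) u x v)"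
    by (fact can_perp_iff_Tprime[OF x v])
  show "\<exists>w\<in>canY. {y \<in> canY. can_T imp y x v} = GammaY canX can_perp canY w"
    using can_T_eq_GammaY[OF x v] lat_ideal_imp_downset[OF x v] mem_canY_iff by blast
  fix u :: "'a set" assume "u \<in> canX"
  then have u: "lat_filter u" by (simp add: mem_canX_iff)
  show "stable canX can_perp canY {x1 \<in> canX. Tprime can_perp canY (can_T imp) u x1 v}"
    unfolding Tprime_can_middle_eq_perpL[OF v]
    by (rule stable_perpL) (simp add: lat_ideal_imp_downset[OF u v] mem_canY_iff)
  show "costable canX can_perp canY {v1 \<in> canY. Tprime can_perp canY (can_T imp) u x v1}"
    unfolding Tprime_can_last_eq_perpR[OF x]
    by (rule costable_perpR) (simp add: lat_filter_filter_join[OF u x] mem_canX_iff)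
next
  fix y x v x1 v1 :: "'a set"
  assume "y \<in> canY" "x \<in> canX" "v \<in> canY" "x1 \<in> canX" "v1 \<in> canY"
    and T_le: "can_T imp y x v \<and> leX can_perp canY x1 x \<and> leY canX can_perp v1 v"
  then have x: "lat_filter x" and v: "lat_ideal v" and "lat_filter x1" "lat_ideal v1"
    by (simp_all add: mem_canX_iff mem_canY_iff)
  moreover have "x1 \<subseteq> x" "v1 \<subseteq> v"
    using T_le leX_can_iff[OF x] leY_can_iff[OF v] by blast+
  ultimately show "can_T imp y x1 v1"
    using T_le can_T_anti_mono by blast
qed

end

theorem proposition4p5:
  fixes imp :: "'a::bounded_lattice \<Rightarrow> 'a \<Rightarrow> 'a"
  assumes "heyting_imp imp"
  shows "heyting_frame (canX :: 'a set set) can_perp (canY :: 'a set set) (can_T imp)"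
  unfolding heyting_frame_def
proof (intro conjI ballI)
  show "implicative_frame canX can_perp canY (can_T imp)"
    by (fact implicative_frame_can[OF assms])
  fix x z :: "'a set" assume "x \<in> canX" "z \<in> canX"
  then have x: "lat_filter x" and z: "lat_filter z" by (simp_all add: mem_canX_iff)
  show "{u \<in> canX. R111 can_perp canY (can_T imp) u x z} = {u \<in> canX. Rle can_perp canY u x z}"
    using R111_can_iff_Rle[OF assms x z] mem_canX_iff by blast
qed

end
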